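(* Let $\sigma$ be a signature. For any set $\Delta\cup\{\alpha\}$ of $\mathcal{CO}[\sigma]$-formulas, $\Delta\models^g\alpha$ if and only if $\Delta\models^c\alpha$.
   Context: A signature $\sigma=(\mathrm{Dom},\mathrm{Ran})$: $\mathrm{Dom}$ nonempty finite set of variables, each with nonempty finite range $\mathrm{Ran}(X)$; $\mathbf X=\mathbf x$ abbreviates $X_1=x_1\wedge\dots\wedge X_n=x_n$ ($\mathbf x\in\prod\mathrm{Ran}(X_i)$), inconsistent if it contains $X=x,X=x'$ with $x\ne x'$. $\mathcal{CO}[\sigma]$: $\alpha::=X=x\mid\neg\alpha\mid\alpha\wedge\alpha\mid\alpha\vee\alpha\mid\mathbf X=\mathbf x\;\Box\!\!\rightarrow\alpha$. Systems of functions $\mathcal F$: for each $V\in\mathrm{En}(\mathcal F)\subseteq\mathrm{Dom}$ parents $PA^{\mathcal F}_V\subseteq\mathrm{Dom}\setminus\{V\}$ and $\mathcal F_V:\mathrm{Ran}(PA^{\mathcal F}_V)\to\mathrm{Ran}(V)$; $\mathrm{Ex}(\mathcal F)=\mathrm{Dom}\setminus\mathrm{En}(\mathcal F)$; only recursive (acyclic parent graph). An assignment $s$ is compatible with $\mathcal F$ if $s(V)=\mathcal F_V(s(PA^{\mathcal F}_V))$ for $V\in\mathrm{En}(\mathcal F)$. For consistent $\mathbf X=\mathbf x$: $\mathcal F_{\mathbf X=\mathbf x}$ restricts $\mathcal F$ to $\mathrm{En}(\mathcal F)\setminus\mathbf X$; $s^{\mathcal F}_{\mathbf X=\mathbf x}$: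 $X_i\mapsto x_i$, $V\mapsto s(V)$ on $\mathrm{Ex}(\mathcal F)\setminus\mathbf X$, $V\mapsto\mathcal F_V(s^{\mathcal F}_{\mathbf X=\mathbf x}(PA^{\mathcal F}_V))$ on $\mathrm{En}(\mathcal F)\setminus\mathbf X$. Causal team $T=(T^-,\mathcal F)$ ($T^-$ a set of compatible assignments; empty team components identified as $\emptyset$); causal subteams $(S^-,\mathcal F)$, $S^-\subseteq T^-$; $T_{\mathbf X=\mathbf x}=(\{s^{\mathcal F}_{\mathbf X=\mathbf x}:s\in T^-\},\mathcal F_{\mathbf X=\mathbf x})$. $\models^c$: $T\models X=x$ iff $s(X)=x$ for all $s\in T^-$; $T\models\neg\alpha$ iff $(\{s\},\mathcal F)\not\models\alpha$ for all $s\in T^-$; $\wedge$ classical; $T\models\alpha\vee\beta$ iff causal subteams $T_1,T_2$ exist with $T_1^-\cup T_2^-=T^-$, $T_1\models\alpha$, $T_2\models\beta$; $T\models\mathbf X=\mathbf x\;\Box\!\!\rightarrow\alpha$ iff $\mathbf X=\mathbf x$ inconsistent or $T_{\mathbf X=\mathbf x}\models\alpha$. Generalized causal team: a set $T$ of compatible pairs $(s,\mathcal F)$ with $\mathcal F$ recursive; $T^-=\{s:(s,\mathcal F)\in T\}$; $T_{\mathbf X=\mathbf x}=\{(s^{\mathcal F}_{\mathbf X=\mathbf x},\mathcal F_{\mathbf X=\mathbf x}):(s,\mathcal F)\in T\}$; $\models^g$: same clauses except $T\models\neg\alpha$ iff $\{(s,\mathcal F)\}\not\models\alpha$ for all $(s,\mathcal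 F)\in T$, and $T\models\alpha\vee\beta$ iff $T=T_1\cup T_2$ with $T_1\models\alpha$, $T_2\models\beta$. $\Delta\models^c\alpha$: every causal team over $\sigma$ satisfying all of $\Delta$ satisfies $\alpha$; $\Delta\models^g\alpha$ likewise for generalized causal teams over $\sigma$. *)

theory Defs
  imports Main
begin

text \<open>Signature: the set of variables Dom is the (finite, nonempty) type 'v;
  R :: 'v \<Rightarrow> 'a set gives the range of each variable.\<close>

definition signature :: "('v::finite \<Rightarrow> 'a set) \<Rightarrow> bool" where
  "signature R \<longleftrightarrow> (\<forall>X. finite (R X) \<and> R X \<noteq> {})"

definition assignment :: "('v \<Rightarrow> 'a set) \<Rightarrow> ('v \<Rightarrow> 'a) \<Rightarrow> bool" where
  "assignment R s \<longleftrightarrow> (\<forall>V. s V \<in> R V)"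

text \<open>Systems of functions: F V = None iff V is exogenous; otherwise
  F V = Some (PA_V, F_V), where F_V takes an assignment and depends only on PA_V
  (canonically: it only looks at PA_V, and is undefined outside Ran(PA_V)).\<close>
type_synonym ('v,'a) system = "'v \<Rightarrow> ('v set \<times> (('v \<Rightarrow> 'a) \<Rightarrow> 'a)) option"

definition En :: "('v,'a) system \<Rightarrow> 'v set" where
  "En F = dom F"

definition parent_rel :: "('v,'a) system \<Rightarrow> ('v \<times> 'v) set" where
  "parent_rel F = {(Y, V). \<exists>P f. F V = Some (P, f) \<and> Y \<in> P}"

definition recursive_sys :: "('v,'a) system \<Rightarrow> bool" where
  "recursive_sys F \<longleftrightarrow> acyclic (parent_rel F)"

definition valid_system :: "('v \<Rightarrow> 'a set) \<Rightarrow> ('v,'a) system \<Rightarrow> bool" where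
  "valid_system R F \<longleftrightarrow>
     (\<forall>V P f. F V = Some (P, f) \<longrightarrow>
        V \<notin> P
      \<and> (\<forall>g. (\<forall>Y\<in>P. g Y \<in> R Y) \<longrightarrow> f g \<in> R V)
      \<and> (\<forall>g. f g = f (\<lambda>Y. if Y \<in> P then g Y else undefined))
      \<and> (\<forall>g. (\<exists>Y\<in>P. g Y \<notin> R Y) \<longrightarrow> f g = undefined))
     \<and> recursive_sys F"

definition compatible :: "('v,'a) system \<Rightarrow> ('v \<Rightarrow> 'a) \<Rightarrow> bool" where
  "compatible F s \<longleftrightarrow> (\<forall>V P f. F V = Some (P, f) \<longrightarrow> s V = f s)"

text \<open>Interventions X = x are lists of (variable, value) pairs.\<close>
definition consistent :: "('v \<times> 'a) list \<Rightarrow> bool" where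
  "consistent xs \<longleftrightarrow> (\<forall>X x x'. (X, x) \<in> set xs \<and> (X, x') \<in> set xs \<longrightarrow> x = x')"

definition restrict_sys :: "('v,'a) system \<Rightarrow> ('v \<times> 'a) list \<Rightarrow> ('v,'a) system" where
  "restrict_sys F xs = (\<lambda>V. case map_of xs V of Some _ \<Rightarrow> None | None \<Rightarrow> F V)"

text \<open>The intervened assignment s^F_{X=x}: the unique assignment satisfying
  the recursive defining equations (unique by recursiveness of F).\<close>
definition interv :: "('v,'a) system \<Rightarrow> ('v \<times> 'a) list \<Rightarrow> ('v \<Rightarrow> 'a) \<Rightarrow> ('v \<Rightarrow> 'a)" where
  "interv F xs s = (THE t. \<forall>V. t V =
      (case map_of xs V of Some x \<Rightarrow> x
       | None \<Rightarrow> (case F V of None \<Rightarrow> s V | Some (P, f) \<Rightarrow> f t)))"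

datatype ('v,'a) co =
    Eq 'v 'a
  | Neg "('v,'a) co"
  | Conj "('v,'a) co" "('v,'a) co"
  | Disj "('v,'a) co" "('v,'a) co"
  | Cf "('v \<times> 'a) list" "('v,'a) co"

fun wf_co :: "('v \<Rightarrow> 'a set) \<Rightarrow> ('v,'a) co \<Rightarrow> bool" where
  "wf_co R (Eq X x) = (x \<in> R X)"
| "wf_co R (Neg a) = wf_co R a"
| "wf_co R (Conj a b) = (wf_co R a \<and> wf_co R b)"
| "wf_co R (Disj a b) = (wf_co R a \<and> wf_co R b)"
| "wf_co R (Cf xs a) = ((\<forall>(X, x) \<in> set xs. x \<in> R X) \<and> wf_co R a)"

fun sat_c :: "('v,'a) system \<Rightarrow> ('v \<Rightarrow> 'a) set \<Rightarrow> ('v,'a) co \<Rightarrow> bool" where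
  "sat_c F T (Eq X x) = (\<forall>s\<in>T. s X = x)"
| "sat_c F T (Neg a) = (\<forall>s\<in>T. \<not> sat_c F {s} a)"
| "sat_c F T (Conj a b) = (sat_c F T a \<and> sat_c F T b)"
| "sat_c F T (Disj a b) = (\<exists>T1 T2. T1 \<subseteq> T \<and> T2 \<subseteq> T \<and> T1 \<union> T2 = T \<and> sat_c F T1 a \<and> sat_c F T2 b)"
| "sat_c F T (Cf xs a) = (\<not> consistent xs \<or> sat_c (restrict_sys F xs) (interv F xs ` T) a)"

fun sat_g :: "(('v \<Rightarrow> 'a) \<times> ('v,'a) system) set \<Rightarrow> ('v,'a) co \<Rightarrow> bool" where
  "sat_g T (Eq X x) = (\<forall>(s, F)\<in>T. s X = x)"
| "sat_g T (Neg a) = (\<forall>p\<in>T. \<not> sat_g {p} a)"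
| "sat_g T (Conj a b) = (sat_g T a \<and> sat_g T b)"
| "sat_g T (Disj a b) = (\<exists>T1 T2. T = T1 \<union> T2 \<and> sat_g T1 a \<and> sat_g T2 b)"
| "sat_g T (Cf xs a) = (\<not> consistent xs \<or>
      sat_g ((\<lambda>(s, F). (interv F xs s, restrict_sys F xs)) ` T) a)"

definition causal_team :: "('v \<Rightarrow> 'a set) \<Rightarrow> ('v,'a) system \<Rightarrow> ('v \<Rightarrow> 'a) set \<Rightarrow> bool" where
  "causal_team R F T \<longleftrightarrow> valid_system R F \<and> (\<forall>s\<in>T. assignment R s \<and> compatible F s)"

definition gen_causal_team :: "('v \<Rightarrow> 'a set) \<Rightarrow> (('v \<Rightarrow> 'a) \<times> ('v,'a) system) set \<Rightarrow> bool" where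
  "gen_causal_team R T \<longleftrightarrow>
     (\<forall>(s, F)\<in>T. valid_system R F \<and> assignment R s \<and> compatible F s)"

definition ent_c :: "('v \<Rightarrow> 'a set) \<Rightarrow> ('v,'a) co set \<Rightarrow> ('v,'a) co \<Rightarrow> bool" where
  "ent_c R \<Delta> \<alpha> \<longleftrightarrow> (\<forall>F T. causal_team R F T \<and> (\<forall>\<delta>\<in>\<Delta>. sat_c F T \<delta>) \<longrightarrow> sat_c F T \<alpha>)"

definition ent_g :: "('v \<Rightarrow> 'a set) \<Rightarrow> ('v,'a) co set \<Rightarrow> ('v,'a) co \<Rightarrow> bool" where
  "ent_g R \<Delta> \<alpha> \<longleftrightarrow> (\<forall>T. gen_causal_team R T \<and> (\<forall>\<delta>\<in>\<Delta>. sat_g T \<delta>) \<longrightarrow> sat_g T \<alpha>)"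

end

theory Submission
  imports Defs
begin

text \<open>Generalized team semantics is flat: a generalized team satisfies a formula iff each
  of its members, as a singleton team, does. A causal team \<open>(T, F)\<close> satisfies exactly the
  formulas satisfied by the generalized team of the pairs \<open>(s, F)\<close>, \<open>s \<in> T\<close>. So a causal
  countermodel is a generalized one, and a generalized countermodel has a failing member
  \<open>(s, F)\<close>, i.e. a failing causal team \<open>({s}, F)\<close>. Neither the signature nor the
  well-formedness hypotheses play any role.\<close>

definition gen_team :: "('v,'a) system \<Rightarrow> ('v \<Rightarrow> 'a) set \<Rightarrow> (('v \<Rightarrow> 'a) \<times> ('v,'a) system) set" where
  "gen_team F T = (\<lambda>s. (s, F)) ` T"

lemma sat_g_empty: "sat_g {} \<alpha>"
  by (induction \<alpha>) auto

lemma sat_g_flat: "sat_g T \<alpha> \<longleftrightarrow> (\<forall>p\<in>T. sat_g {p} \<alpha>)"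
proof (induction \<alpha> arbitrary: T)
  case (Eq X x)
  show ?case by auto
next
  case (Neg \<alpha>)
  show ?case by simp
next
  case (Conj \<alpha> \<beta>)
  show ?case
    using Conj.IH[of T] by (simp only: sat_g.simps) blast
next
  case (Disj \<alpha> \<beta>)
  show ?case
  proof
    assume "sat_g T (Disj \<alpha> \<beta>)"
    then obtain T1 T2 where T: "T = T1 \<union> T2" "sat_g T1 \<alpha>" "sat_g T2 \<beta>" by auto
    show "\<forall>p\<in>T. sat_g {p} (Disj \<alpha> \<beta>)"
    proof
      fix p assume "p \<in> T"
      then have "sat_g {p} \<alpha> \<or> sat_g {p} \<beta>"
        using T Disj.IH(1)[of T1] Disj.IH(2)[of T2] by blast
      moreover have "{p} = {p} \<union> {}" "{p} = {} \<union> {p}" by simp_all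
      ultimately show "sat_g {p} (Disj \<alpha> \<beta>)"
        unfolding sat_g.simps using sat_g_empty by blast
    qed
  next
    assume pointwise: "\<forall>p\<in>T. sat_g {p} (Disj \<alpha> \<beta>)"
    define T1 where "T1 = {p\<in>T. sat_g {p} \<alpha>}"
    define T2 where "T2 = {p\<in>T. sat_g {p} \<beta>}"
    have "T \<subseteq> T1 \<union> T2"
    proof
      fix p assume "p \<in> T"
      then obtain A B where AB: "{p} = A \<union> B" "sat_g A \<alpha>" "sat_g B \<beta>"
        using pointwise by auto
      then have "p \<in> A \<or> p \<in> B" by blast
      then have "sat_g {p} \<alpha> \<or> sat_g {p} \<beta>"
        using AB(2,3) Disj.IH(1)[of A] Disj.IH(2)[of B] by blast
      with \<open>p \<in> T\<close> show "p \<in> T1 \<union> T2" by (simp add: T1_def T2_def)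
    qed
    then have "T = T1 \<union> T2" by (auto simp: T1_def T2_def)
    moreover have "sat_g T1 \<alpha>" "sat_g T2 \<beta>"
      using Disj.IH(1)[of T1] Disj.IH(2)[of T2] by (auto simp: T1_def T2_def)
    ultimately show "sat_g T (Disj \<alpha> \<beta>)" unfolding sat_g.simps by blast
  qed
next
  case (Cf xs \<alpha>)
  let ?intervene = "\<lambda>(s, F). (interv F xs s, restrict_sys F xs)"
  have "sat_g (?intervene ` T) \<alpha> \<longleftrightarrow> (\<forall>p\<in>T. sat_g {?intervene p} \<alpha>)"
    using Cf.IH[of "?intervene ` T"] by blast
  then show ?case unfolding sat_g.simps image_insert image_empty by blast
qed

lemma gen_team_eq_Un_iff:
  "gen_team F T = U1 \<union> U2 \<longleftrightarrow>
    (\<exists>T1 T2. T = T1 \<union> T2 \<and> U1 = gen_team F T1 \<and> U2 = gen_team F T2)"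
proof
  assume T: "gen_team F T = U1 \<union> U2"
  then have "U1 = gen_team F (fst ` U1)" "U2 = gen_team F (fst ` U2)"
    unfolding gen_team_def by force+
  moreover have "T = fst ` U1 \<union> fst ` U2"
    using arg_cong[OF T, of "image fst"] by (simp add: gen_team_def image_image image_Un)
  ultimately show "\<exists>T1 T2. T = T1 \<union> T2 \<and> U1 = gen_team F T1 \<and> U2 = gen_team F T2"
    by blast
qed (auto simp: gen_team_def)

lemma sat_c_iff_sat_g_gen_team: "sat_c F T \<alpha> \<longleftrightarrow> sat_g (gen_team F T) \<alpha>"
proof (induction \<alpha> arbitrary: F T)
  case (Disj \<alpha> \<beta>)
  have "sat_g (gen_team F T) (Disj \<alpha> \<beta>) \<longleftrightarrow>
      (\<exists>T1 T2. T = T1 \<union> T2 \<and> sat_g (gen_team F T1) \<alpha> \<and> sat_g (gen_team F T2) \<beta>)"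
    by (simp only: sat_g.simps gen_team_eq_Un_iff) blast
  then show ?case
    using Disj.IH by auto
next
  case (Cf xs \<alpha>)
  have "(\<lambda>(s, F). (interv F xs s, restrict_sys F xs)) ` gen_team F T
      = gen_team (restrict_sys F xs) (interv F xs ` T)"
    unfolding gen_team_def image_image by simp
  then show ?case using Cf.IH by simp
qed (auto simp: gen_team_def)

lemma gen_causal_team_gen_team:
  "causal_team R F T \<Longrightarrow> gen_causal_team R (gen_team F T)"
  by (auto simp: gen_causal_team_def causal_team_def gen_team_def)

lemma causal_team_singleton:
  "gen_causal_team R T \<Longrightarrow> (s, F) \<in> T \<Longrightarrow> causal_team R F {s}"
  by (auto simp: gen_causal_team_def causal_team_def)

lemma ent_c_if_ent_g: "ent_g R \<Delta> \<alpha> \<Longrightarrow> ent_c R \<Delta> \<alpha>"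
  unfolding ent_c_def ent_g_def
  by (metis gen_causal_team_gen_team sat_c_iff_sat_g_gen_team)

lemma ent_g_if_ent_c:
  assumes "ent_c R \<Delta> \<alpha>"
  shows "ent_g R \<Delta> \<alpha>"
  unfolding ent_g_def
proof (intro allI impI)
  fix T assume T: "gen_causal_team R T \<and> (\<forall>\<delta>\<in>\<Delta>. sat_g T \<delta>)"
  have "sat_g {(s, F)} \<alpha>" if "(s, F) \<in> T" for s F
  proof -
    have "gen_team F {s} = {(s, F)}" by (simp add: gen_team_def)
    moreover have "\<forall>\<delta>\<in>\<Delta>. sat_g {(s, F)} \<delta>"
      using T sat_g_flat that by blast
    ultimately have "\<forall>\<delta>\<in>\<Delta>. sat_c F {s} \<delta>"
      by (simp add: sat_c_iff_sat_g_gen_team)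
    then have "sat_c F {s} \<alpha>"
      using assms causal_team_singleton T that unfolding ent_c_def by blast
    then show ?thesis
      by (simp add: sat_c_iff_sat_g_gen_team gen_team_def)
  qed
  then show "sat_g T \<alpha>"
    using sat_g_flat by fast
qed

theorem corollary2p17:
  fixes R :: "'v::finite \<Rightarrow> 'a set"
    and \<Delta> :: "('v,'a) co set" and \<alpha> :: "('v,'a) co"
  assumes "signature R"
    and "\<forall>\<delta>\<in>\<Delta>. wf_co R \<delta>"
    and "wf_co R \<alpha>"
  shows "ent_g R \<Delta> \<alpha> \<longleftrightarrow> ent_c R \<Delta> \<alpha>"
  using ent_c_if_ent_g ent_g_if_ent_c by blast

end
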